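(* For every $q^s\in\mathbb{R}^{d_s}$ and every $i=1,\dots,d_s$, $F_3(q^s)^TG_{2,i}(q^s)=G_{2,i}(q^s)^TF_3(q^s)$, i.e. $F_3^TG_{2,i}$ is symmetric.
   Context: Let $d_f,d_s\ge1$, $\epsilon>0$, and let $K:\mathbb{R}^{d_s}\to\mathbb{R}^{d_f\times d_f}$ be continuously differentiable with symmetric positive definite values. Let $H>0$, let $n\ge1$ be an integer and $h=H/2^n$. For $q^s\in\mathbb{R}^{d_s}$ write $a=\epsilon^{-1}K(q^s)$ and $b_i=\epsilon^{-1}\partial K(q^s)/\partial q^s_i$, and define the $2d_f\times 2d_f$ block matrices $$A(q^s)=\begin{bmatrix} I-\tfrac{h^2}{2}a & h\,a\\ -h\big(I-\tfrac{h^2}{4}a\big) & I-\tfrac{h^2}{2}a\end{bmatrix},\quad C(q^s)=\begin{bmatrix} I-\tfrac{h^2}{2}a & h\big(I-\tfrac{h^2}{4}a\big)\\ -h\,a & I-\tfrac{h^2}{2}a\end{bmatrix},$$ $$B_i(q^s)=\begin{bmatrix} h\,b_i & \tfrac{h^2}{2}b_i\\ -\tfrac{h^2}{2}b_i & -\tfrac{h^3}{4}b_i\end{bmatrix}.$$ Define $F_2,G_{2,i},F_3$ by $\begin{bmatrix}F_2 & G_{2,i}\\0&F_3\end{bmatrix}=\begin{bmatrix}A&B_i\\0&C\end{bmatrix}^{2^n}$. *)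

theory Defs
  imports "HOL-Analysis.Analysis"
begin

definition block_mat ::
  "real^'n^'n \<Rightarrow> real^'n^'n \<Rightarrow> real^'n^'n \<Rightarrow> real^'n^'n \<Rightarrow> real^('n+'n)^('n+'n)" where
  "block_mat P Q R S = (\<chi> i j. case i of
       Inl i' \<Rightarrow> (case j of Inl j' \<Rightarrow> P$i'$j' | Inr j' \<Rightarrow> Q$i'$j')
     | Inr i' \<Rightarrow> (case j of Inl j' \<Rightarrow> R$i'$j' | Inr j' \<Rightarrow> S$i'$j'))"

definition blk11 :: "real^('n+'n)^('n+'n) \<Rightarrow> real^'n^'n" where
  "blk11 M = (\<chi> i j. M $ Inl i $ Inl j)"
definition blk12 :: "real^('n+'n)^('n+'n) \<Rightarrow> real^'n^'n" where
  "blk12 M = (\<chi> i j. M $ Inl i $ Inr j)"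
definition blk21 :: "real^('n+'n)^('n+'n) \<Rightarrow> real^'n^'n" where
  "blk21 M = (\<chi> i j. M $ Inr i $ Inl j)"
definition blk22 :: "real^('n+'n)^('n+'n) \<Rightarrow> real^'n^'n" where
  "blk22 M = (\<chi> i j. M $ Inr i $ Inr j)"

text \<open>Matrix power with respect to matrix multiplication (not the pointwise product).\<close>
fun mat_pow :: "real^'n^'n \<Rightarrow> nat \<Rightarrow> real^'n^'n" where
  "mat_pow M 0 = mat 1"
| "mat_pow M (Suc k) = M ** mat_pow M k"

definition Amat :: "real \<Rightarrow> real^'f^'f \<Rightarrow> real^('f+'f)^('f+'f)" where
  "Amat h a = block_mat (mat 1 - (h^2/2) *\<^sub>R a) (h *\<^sub>R a)
                        (- (h *\<^sub>R (mat 1 - (h^2/4) *\<^sub>R a))) (mat 1 - (h^2/2) *\<^sub>R a)"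

definition Cmat :: "real \<Rightarrow> real^'f^'f \<Rightarrow> real^('f+'f)^('f+'f)" where
  "Cmat h a = block_mat (mat 1 - (h^2/2) *\<^sub>R a) (h *\<^sub>R (mat 1 - (h^2/4) *\<^sub>R a))
                        (- (h *\<^sub>R a)) (mat 1 - (h^2/2) *\<^sub>R a)"

definition Bmat :: "real \<Rightarrow> real^'f^'f \<Rightarrow> real^('f+'f)^('f+'f)" where
  "Bmat h b = block_mat (h *\<^sub>R b) ((h^2/2) *\<^sub>R b)
                        (- ((h^2/2) *\<^sub>R b)) (- ((h^3/4) *\<^sub>R b))"

end

theory Submission imports Defs begin

(* Write M = [A B; 0 C] for the block upper-triangular matrix whose
   2^n-th power has blocks F2, G2 (top row) and F3 (bottom right).  Multiplying
   by M once more gives the recurrence  F' = C F,  G' = A G + B F.  If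
     (i)  A^T C = I   and   (ii)  C^T B is symmetric,
   then symmetry of F^T G is preserved by this step:
     (C F)^T (A G + B F) = F^T G + F^T (C^T B) F,
   and both summands are symmetric.  Since the zeroth power has G = 0, F^T G is
   symmetric for every power of M. *)

lemma matrix_mult_diff_rdistrib: "(A - B) ** (C::real^_^_) = A ** C - B ** C"
  by (simp add: matrix_matrix_mult_def vec_eq_iff sum_subtractf left_diff_distrib)

lemma matrix_mult_diff_ldistrib: "(C::real^_^_) ** (A - B) = C ** A - C ** B"
  by (simp add: matrix_matrix_mult_def vec_eq_iff sum_subtractf right_diff_distrib)

lemma matrix_mult_add_rdistrib: "(A + B) ** (C::real^_^_) = A ** C + B ** C"
  by (simp add: matrix_matrix_mult_def vec_eq_iff sum.distrib distrib_right)

lemma matrix_mult_uminus_right: "(C::real^_^_) ** (- A) = - (C ** A)"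
  by (simp add: matrix_matrix_mult_def vec_eq_iff sum_negf)

lemma matrix_mult_uminus_left: "(- A) ** (C::real^_^_) = - (A ** C)"
  by (simp add: matrix_matrix_mult_def vec_eq_iff sum_negf)

lemma matrix_mult_scaleR_left: "(k *\<^sub>R A) ** (C::real^_^_) = k *\<^sub>R (A ** C)"
  by (simp add: scalar_matrix_assoc)

lemma matrix_mult_scaleR_right: "(C::real^_^_) ** (k *\<^sub>R A) = k *\<^sub>R (C ** A)"
  by (simp add: matrix_scalar_ac scalar_matrix_assoc)

lemma transpose_add: "transpose (A + B) = transpose A + transpose (B::real^_^_)"
  by (simp add: transpose_def vec_eq_iff)

lemma transpose_diff: "transpose (A - B) = transpose A - transpose (B::real^_^_)"
  by (simp add: transpose_def vec_eq_iff)

lemma transpose_uminus: "transpose (- A) = - transpose (A::real^_^_)"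
  by (simp add: transpose_def vec_eq_iff)

lemma transpose_zero: "transpose (0::real^_^_) = 0"
  by (simp add: transpose_def vec_eq_iff)

lemmas matrix_ring_simps =
  matrix_mult_diff_rdistrib matrix_mult_diff_ldistrib matrix_mult_add_rdistrib
  matrix_add_ldistrib matrix_mult_uminus_right matrix_mult_uminus_left
  matrix_mult_scaleR_left matrix_mult_scaleR_right
  transpose_add transpose_diff transpose_uminus transpose_zero
  transpose_scalar matrix_transpose_mul

text \<open>Transposition is a bounded linear map, so it commutes with derivatives.\<close>

lemma bounded_linear_transpose: "bounded_linear (transpose :: real^'n^'m \<Rightarrow> real^'m^'n)"
  by (rule linear_conv_bounded_linear[THEN iffD1], rule linearI)
     (simp_all add: transpose_add transpose_scalar)

lemma sum_UNIV_Plus: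
  "(\<Sum>k\<in>(UNIV::('a::finite + 'b::finite) set). f k) = (\<Sum>k\<in>UNIV. f (Inl k)) + (\<Sum>k\<in>UNIV. f (Inr k))"
  using sum.Plus[of "UNIV::'a set" "UNIV::'b set" f] by (simp add: o_def)

lemma block_mult:
  "block_mat P Q R S ** block_mat P' Q' R' S' =
   block_mat (P ** P' + Q ** R') (P ** Q' + Q ** S') (R ** P' + S ** R') (R ** Q' + S ** S')"
  by (simp add: block_mat_def matrix_matrix_mult_def vec_eq_iff sum_UNIV_Plus split: sum.split)

lemma block_transpose:
  "transpose (block_mat P Q R S) = block_mat (transpose P) (transpose R) (transpose Q) (transpose S)"
  by (simp add: block_mat_def transpose_def vec_eq_iff split: sum.split)

lemma block_one: "(mat 1 :: real^('n::finite + 'n)^('n + 'n)) = block_mat (mat 1) 0 0 (mat 1)"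
  by (simp add: block_mat_def mat_def vec_eq_iff split: sum.split)

lemma blk_block:
  "blk11 (block_mat P Q R S) = P" "blk12 (block_mat P Q R S) = Q"
  "blk21 (block_mat P Q R S) = R" "blk22 (block_mat P Q R S) = S"
  by (simp_all add: blk11_def blk12_def blk21_def blk22_def block_mat_def vec_eq_iff)

lemma block_eq:
  "block_mat P Q R S = block_mat P' Q' R' S' \<longleftrightarrow> P = P' \<and> Q = Q' \<and> R = R' \<and> S = S'"
  by (metis blk_block)

lemma blk12_mult: "blk12 (block_mat P Q R S ** X) = P ** blk12 X + Q ** blk22 X"
  by (simp add: blk12_def blk22_def block_mat_def matrix_matrix_mult_def vec_eq_iff sum_UNIV_Plus)

lemma blk22_mult: "blk22 (block_mat P Q R S ** X) = R ** blk12 X + S ** blk22 X"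
  by (simp add: blk12_def blk22_def block_mat_def matrix_matrix_mult_def vec_eq_iff sum_UNIV_Plus)

lemma symmetric_product_step:
  fixes A B C F G :: "real^'m^'m"
  assumes AC: "transpose A ** C = mat 1"
    and CB: "transpose (transpose C ** B) = transpose C ** B"
    and FG: "transpose F ** G = transpose G ** F"
  shows "transpose (C ** F) ** (A ** G + B ** F) = transpose (A ** G + B ** F) ** (C ** F)"
proof -
  have CA: "transpose C ** A = mat 1"
    using arg_cong[OF AC, of transpose] by (simp add: matrix_transpose_mul)
  have "transpose (C ** F) ** (A ** G + B ** F)
      = transpose F ** (transpose C ** A) ** G + transpose F ** (transpose C ** B) ** F"
    by (simp add: matrix_transpose_mul matrix_add_ldistrib matrix_mul_assoc)
  also have "\<dots> = transpose G ** F + transpose F ** transpose (transpose C ** B) ** F"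
    using CA CB FG by simp
  also have "\<dots> = transpose G ** (transpose A ** C) ** F + transpose F ** transpose B ** C ** F"
    using AC by (simp add: matrix_transpose_mul matrix_mul_assoc)
  also have "\<dots> = transpose (A ** G + B ** F) ** (C ** F)"
    by (simp add: matrix_transpose_mul matrix_mult_add_rdistrib matrix_mul_assoc transpose_add)
  finally show ?thesis .
qed

lemma triangular_power_symmetric:
  fixes A B C :: "real^'m^'m"
  assumes AC: "transpose A ** C = mat 1"
    and CB: "transpose (transpose C ** B) = transpose C ** B"
  defines "P N \<equiv> mat_pow (block_mat A B 0 C) N"
  shows "transpose (blk22 (P N)) ** blk12 (P N) = transpose (blk12 (P N)) ** blk22 (P N)"
proof (induction N)
  case 0
  show ?case
    by (simp add: P_def block_one blk_block transpose_zero)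
next
  case (Suc N)
  have "blk22 (P (Suc N)) = C ** blk22 (P N)"
    and "blk12 (P (Suc N)) = A ** blk12 (P N) + B ** blk22 (P N)"
    by (simp_all add: P_def blk12_mult blk22_mult)
  then show ?case
    using symmetric_product_step[OF AC CB Suc.IH] by simp
qed

text \<open>For symmetric a, the blocks satisfy A(a)^T C(a) = I: the h^2 and h^4 terms cancel.\<close>

lemma Amat_Cmat_identity:
  fixes a :: "real^'f^'f"
  assumes "transpose a = a"
  shows "transpose (Amat h a) ** Cmat h a = mat 1"
  unfolding Amat_def Cmat_def block_transpose block_mult block_one block_eq
  using assms
  by (simp add: matrix_ring_simps vec_eq_iff algebra_simps power2_eq_square power3_eq_cube)

lemma Cmat_Bmat_symmetric:
  fixes a b :: "real^'f^'f"
  assumes "transpose a = a" "transpose b = b"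
  shows "transpose (transpose (Cmat h a) ** Bmat h b) = transpose (Cmat h a) ** Bmat h b"
  unfolding Bmat_def Cmat_def block_transpose block_mult block_one block_eq
  using assms
  by (simp add: matrix_ring_simps vec_eq_iff algebra_simps power2_eq_square power3_eq_cube)

text \<open>If K takes symmetric values, so does each directional derivative of K,
  because transposition is linear and derivatives are unique.\<close>

lemma derivative_symmetric:
  fixes K :: "'a::real_normed_vector \<Rightarrow> real^'n^'n"
  assumes deriv: "(K has_derivative K') (at q)"
    and sym: "\<And>x. transpose (K x) = K x"
  shows "transpose (K' v) = K' v"
proof -
  have "((\<lambda>x. transpose (K x)) has_derivative (\<lambda>v. transpose (K' v))) (at q)"
    using bounded_linear.has_derivative[OF bounded_linear_transpose deriv] .
  then have "(K has_derivative (\<lambda>v. transpose (K' v))) (at q)"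
    using sym by simp
  then have "(\<lambda>v. transpose (K' v)) = K'"
    using deriv by (rule has_derivative_unique)
  then show ?thesis
    by (simp add: fun_eq_iff)
qed

theorem lemma3p6:
  fixes K :: "real^'s \<Rightarrow> real^'f^'f"
    and K' :: "real^'s \<Rightarrow> real^'s \<Rightarrow> real^'f^'f"
    and \<epsilon> H :: real and n :: nat
  assumes eps: "\<epsilon> > 0"
    and deriv: "\<And>q. (K has_derivative K' q) (at q)"
    and cont: "\<And>v. continuous_on UNIV (\<lambda>q. K' q v)"
    and sym: "\<And>q. transpose (K q) = K q"
    and posdef: "\<And>q x. x \<noteq> 0 \<Longrightarrow> x \<bullet> (K q *v x) > 0"
    and H: "H > 0" and n: "n \<ge> 1"
  shows "\<forall>q i.
    let h = H / 2^n;
        a = (1/\<epsilon>) *\<^sub>R K q;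
        b = (1/\<epsilon>) *\<^sub>R K' q (axis i 1);
        P = mat_pow (block_mat (Amat h a) (Bmat h b) 0 (Cmat h a)) (2^n);
        G2 = blk12 P;
        F3 = blk22 P
    in transpose F3 ** G2 = transpose G2 ** F3"
proof (intro allI)
  fix q i
  define a where "a = (1/\<epsilon>) *\<^sub>R K q"
  define b where "b = (1/\<epsilon>) *\<^sub>R K' q (axis i 1)"
  have a_sym: "transpose a = a"
    using sym by (simp add: a_def transpose_scalar)
  have b_sym: "transpose b = b"
    using derivative_symmetric[OF deriv sym] by (simp add: b_def transpose_scalar)
  show "let h = H / 2^n;
        a = (1/\<epsilon>) *\<^sub>R K q;
        b = (1/\<epsilon>) *\<^sub>R K' q (axis i 1);
        P = mat_pow (block_mat (Amat h a) (Bmat h b) 0 (Cmat h a)) (2^n);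
        G2 = blk12 P;
        F3 = blk22 P
    in transpose F3 ** G2 = transpose G2 ** F3"
    unfolding Let_def a_def[symmetric] b_def[symmetric]
    using triangular_power_symmetric[OF Amat_Cmat_identity[OF a_sym] Cmat_Bmat_symmetric[OF a_sym b_sym]]
    by blast
qed

end
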